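(* Let $i\ne j$ be agents and $\chi_i(0),\chi_j(0)>0$ with $\chi_i(0)+\chi_j(0)\le1$ such that $$\lim_{N\to\infty}\frac{\sum_{k=\chi_i(0)N}^\infty 1/F_i(k)}{\sum_{k=\chi_j(0)N}^\infty 1/F_j(k)}=1. \qquad (\ast)$$ (1) If there is $C<\infty$ with $\frac1kF_i(k)\sum_{l=k}^\infty\frac1{F_i(l)}\le C$ for all $k\in\mathbb{N}$, then for every $\epsilon>0$ $$\limsup_{N\to\infty}\frac{\sum_{k=(\chi_i(0)+\epsilon)N}^\infty 1/F_i(k)}{\sum_{k=\chi_j(0)N}^\infty 1/F_j(k)}<1 .$$ (2) If $\lim_{k\to\infty}\frac1kF_i(k)\sum_{l=k}^\infty\frac1{F_i(l)}=\infty$ and $(\ast)$ holds for one choice of $\chi_i(0),\chi_j(0)$, then $(\ast)$ holds for all choices $\chi_i(0),\chi_j(0)>0$ with $\chi_i(0)+\chi_j(0)\le1$.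
   Context: Feedback functions $F_i,F_j:\mathbb{N}\to(0,\infty)$ with $\sum_k 1/F_i(k)<\infty$ and $\sum_k1/F_j(k)<\infty$. Sums whose lower limit $xN$ is non-integer start at the rounded value. *)

theory Defs
  imports "HOL-Analysis.Analysis"
begin

definition tail :: "(nat \<Rightarrow> real) \<Rightarrow> nat \<Rightarrow> real" where
  "tail F m = (\<Sum>k. 1 / F (k + m))"

definition lowidx :: "real \<Rightarrow> nat \<Rightarrow> nat" where
  "lowidx x N = nat (round (x * real N))"

definition tail_ratio ::
  "(nat \<Rightarrow> real) \<Rightarrow> (nat \<Rightarrow> real) \<Rightarrow> real \<Rightarrow> real \<Rightarrow> nat \<Rightarrow> real" where
  "tail_ratio Fi Fj a b N = tail Fi (lowidx a N) / tail Fj (lowidx b N)"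

end

theory Submission
  imports Defs
begin

text \<open>
  Write \<open>T n\<close> for the tail \<open>\<Sum>k\<ge>n. 1 / F k\<close>. Since
  \<open>T n - T m = \<Sum>n\<le>l<m. T l / (F l * T l)\<close>, the growth quantity \<open>F l * T l / l\<close> controls
  how fast the tail decays. If it is bounded by \<open>C\<close>, then
  \<open>(1 + (m - n) / (C * m)) * T m \<le> T n\<close>, so moving the lower limit from \<open>a N\<close> to
  \<open>(a + \<epsilon>) N\<close> shrinks the tail by a fixed factor below 1. If it tends to infinity, then
  \<open>T m / T n \<rightarrow> 1\<close> whenever \<open>m / n\<close> stays bounded above and below: the tail is slowly
  varying along linear index sequences. Then the given limit at one pair \<open>(a\<^sub>0, b\<^sub>0)\<close>
  transfers to any \<open>(a, b)\<close> by evaluating it at \<open>M \<approx> b N / b\<^sub>0\<close>; the tail of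
  \<open>F\<^sub>j\<close>, about which only monotonicity is known, is sandwiched between the values at
  \<open>M = \<lfloor>b N / b\<^sub>0\<rfloor>\<close> and \<open>M = \<lceil>b N / b\<^sub>0\<rceil>\<close>.
\<close>

lemma abs_quotient_sub_one_le:
  fixes x y \<delta> :: real
  assumes y: "0 < y" "y \<le> x" and close: "(1 - \<delta>) * x \<le> y" and \<delta>: "0 \<le> \<delta>" "\<delta> \<le> 1 / 2"
  shows "\<bar>y / x - 1\<bar> \<le> 2 * \<delta>" and "\<bar>x / y - 1\<bar> \<le> 2 * \<delta>"
proof -
  have x: "0 < x" using y by linarith
  show "\<bar>y / x - 1\<bar> \<le> 2 * \<delta>"
    using x y close \<delta> by (simp add: abs_le_iff field_simps)
  have "x - y \<le> \<delta> * x" using close by (simp add: algebra_simps)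
  also have "\<dots> \<le> \<delta> * (2 * y)"
  proof (rule mult_left_mono)
    have "\<delta> * x \<le> x / 2" using mult_right_mono[OF \<delta>(2), of x] x by simp
    then show "x \<le> 2 * y" using close by (simp add: algebra_simps)
  qed (use \<delta> in simp)
  finally show "\<bar>x / y - 1\<bar> \<le> 2 * \<delta>"
    using x y by (simp add: abs_le_iff field_simps)
qed

lemma linear_approx_eventually_bounds:
  fixes p :: "nat \<Rightarrow> nat"
  assumes r: "r > 0" and approx: "\<And>N. \<bar>real (p N) - r * real N\<bar> \<le> d"
  shows "eventually (\<lambda>N. r * real N / 2 \<le> real (p N) \<and> real (p N) \<le> 2 * r * real N) sequentially"
proof -
  obtain N0 :: nat where N0: "2 * d / r \<le> real N0" using real_arch_simple by blast
  show ?thesis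
    using eventually_ge_at_top[of N0]
  proof eventually_elim
    case (elim N)
    then have "2 * d / r \<le> real N" using N0 by linarith
    then have "2 * d \<le> r * real N" using r by (simp add: field_simps)
    then show ?case using approx[of N] by (simp add: abs_le_iff)
  qed
qed

lemma filterlim_at_top_linear_approx:
  fixes p :: "nat \<Rightarrow> nat"
  assumes r: "r > 0" and approx: "\<And>N. \<bar>real (p N) - r * real N\<bar> \<le> d"
  shows "filterlim p at_top sequentially"
  unfolding filterlim_at_top
proof
  fix Z :: nat
  obtain N0 :: nat where N0: "2 * real Z / r \<le> real N0" using real_arch_simple by blast
  show "eventually (\<lambda>N. Z \<le> p N) sequentially"
    using eventually_ge_at_top[of N0] linear_approx_eventually_bounds[OF r approx]
  proof eventually_elim
    case (elim N)
    then have "2 * real Z / r \<le> real N" using N0 by linarith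
    then have "real Z \<le> r * real N / 2" using r by (simp add: field_simps)
    then show ?case using elim by linarith
  qed
qed

lemma lowidx_approx:
  assumes "x \<ge> 0"
  shows "\<bar>real (lowidx x N) - x * real N\<bar> \<le> 1 / 2"
proof -
  have "0 \<le> round (x * real N)" using round_mono[of 0 "x * real N"] assms by simp
  then have "real (lowidx x N) = of_int (round (x * real N))" by (simp add: lowidx_def)
  then show ?thesis using of_int_round_abs_le[of "x * real N"] by simp
qed

lemma lowidx_mono: "0 \<le> x \<Longrightarrow> x * real M \<le> y * real N \<Longrightarrow> lowidx x M \<le> lowidx y N"
  unfolding lowidx_def by (intro nat_mono round_mono)

lemma lowidx_shift_gap_eventually:
  assumes a: "a > 0" and \<epsilon>: "\<epsilon> > 0"
  defines "\<delta> \<equiv> \<epsilon> / (2 * (a + \<epsilon>))" \<comment> \<open>half the asymptotic relative gap \<open>\<epsilon> / (a + \<epsilon>)\<close>\<close>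
  shows "eventually (\<lambda>N. 1 \<le> lowidx a N \<and> lowidx a N \<le> lowidx (a + \<epsilon>) N \<and>
           \<delta> * real (lowidx (a + \<epsilon>) N) \<le> real (lowidx (a + \<epsilon>) N) - real (lowidx a N)) sequentially"
proof -
  obtain N0 :: nat where N0: "max (3 / (2 * a)) (3 / \<epsilon>) \<le> real N0"
    using real_arch_simple by blast
  show ?thesis
    using eventually_ge_at_top[of N0]
  proof eventually_elim
    case (elim N)
    define n m where "n = lowidx a N" and "m = lowidx (a + \<epsilon>) N"
    have n: "\<bar>real n - a * real N\<bar> \<le> 1 / 2"
      unfolding n_def using a by (intro lowidx_approx) simp
    have m: "\<bar>real m - (a + \<epsilon>) * real N\<bar> \<le> 1 / 2"
      unfolding m_def using a \<epsilon> by (intro lowidx_approx) simp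
    have "3 / (2 * a) \<le> real N" and "3 / \<epsilon> \<le> real N" using N0 elim by auto
    then have aN: "3 / 2 \<le> a * real N" and \<epsilon>N: "3 \<le> \<epsilon> * real N"
      using a \<epsilon> by (simp_all add: field_simps)
    have gap: "\<epsilon> * real N - 1 \<le> real m - real n"
      using n m unfolding abs_le_iff by (simp add: algebra_simps)
    have "\<delta> \<le> 1 / 2" and "\<delta> * (a + \<epsilon>) = \<epsilon> / 2"
      using a \<epsilon> by (simp_all add: \<delta>_def field_simps)
    have "\<delta> * real m \<le> \<delta> * ((a + \<epsilon>) * real N + 1 / 2)"
      using m a \<epsilon> unfolding abs_le_iff by (intro mult_left_mono) (auto simp: \<delta>_def)
    also have "\<dots> = (\<delta> * (a + \<epsilon>)) * real N + \<delta> / 2" by (simp add: algebra_simps)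
    also have "\<dots> = \<epsilon> * real N / 2 + \<delta> / 2" unfolding \<open>\<delta> * (a + \<epsilon>) = \<epsilon> / 2\<close> by simp
    also have "\<dots> \<le> real m - real n" using gap \<epsilon>N \<open>\<delta> \<le> 1 / 2\<close> by linarith
    finally have "\<delta> * real m \<le> real m - real n" .
    moreover have "1 \<le> real n" using n aN unfolding abs_le_iff by linarith
    moreover have "n \<le> m" using gap \<epsilon>N by linarith
    ultimately show ?case by (simp add: n_def m_def)
  qed
qed

locale recip_summable =
  fixes F :: "nat \<Rightarrow> real"
  assumes pos: "\<And>k. F k > 0"
    and summable: "summable (\<lambda>k. 1 / F k)"
begin

lemma tail_Suc: "tail F m = 1 / F m + tail F (Suc m)"
proof -
  have s: "summable (\<lambda>k. 1 / F (k + m))"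
    using summable_ignore_initial_segment[OF summable] by simp
  show ?thesis
    using suminf_split_head[OF s] by (simp add: tail_def)
qed

lemma tail_pos: "tail F m > 0"
  unfolding tail_def
  by (rule suminf_pos) (use summable_ignore_initial_segment[OF summable] pos in auto)

lemma tail_diff_eq_sum:
  assumes "n \<le> m"
  shows "tail F n - tail F m = (\<Sum>l\<in>{n..<m}. 1 / F l)"
  using assms
proof (induction m rule: dec_induct)
  case (step m)
  then show ?case using tail_Suc[of m] by simp
qed simp

lemma tail_antimono:
  assumes "n \<le> m"
  shows "tail F m \<le> tail F n"
proof -
  have "0 \<le> (\<Sum>l\<in>{n..<m}. 1 / F l)"
    using pos by (intro sum_nonneg) (simp add: less_imp_le)
  then show ?thesis using tail_diff_eq_sum[OF assms] by simp
qed

lemma tail_diff_le_of_growth: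
  assumes K: "K > 0"
    and growth: "\<And>l. n \<le> l \<Longrightarrow> l < m \<Longrightarrow> K * real l \<le> F l * tail F l"
    and n: "1 \<le> n" "n \<le> m"
  shows "(1 - (real m - real n) / (K * real n)) * tail F n \<le> tail F m"
proof -
  have "1 / F l \<le> tail F n / (K * real n)" if l: "n \<le> l" "l < m" for l
  proof -
    have "1 / F l \<le> tail F l / (K * real l)"
      using growth[OF l] pos[of l] K l n by (simp add: field_simps)
    also have "\<dots> \<le> tail F n / (K * real n)"
      using tail_pos[of n] tail_antimono[OF l(1)] K l n by (intro frac_le) auto
    finally show ?thesis .
  qed
  then have "(\<Sum>l\<in>{n..<m}. 1 / F l) \<le> (\<Sum>l\<in>{n..<m}. tail F n / (K * real n))"
    by (intro sum_mono) auto
  then have "tail F n - tail F m \<le> (real m - real n) * (tail F n / (K * real n))"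
    using tail_diff_eq_sum[OF n(2)] n by (simp add: of_nat_diff)
  then show ?thesis by (simp add: algebra_simps)
qed

lemma tail_diff_ge_of_bound:
  assumes C: "C > 0"
    and bound: "\<And>l. n \<le> l \<Longrightarrow> l < m \<Longrightarrow> F l * tail F l \<le> C * real l"
    and n: "1 \<le> n" "n \<le> m"
  shows "(1 + (real m - real n) / (C * real m)) * tail F m \<le> tail F n"
proof -
  have "tail F m / (C * real m) \<le> 1 / F l" if l: "n \<le> l" "l < m" for l
  proof -
    have "tail F m / (C * real m) \<le> tail F l / (C * real l)"
      using tail_pos[of l] tail_antimono[of l m] C l n by (intro frac_le) auto
    also have "\<dots> \<le> 1 / F l"
      using bound[OF l] pos[of l] C l n by (simp add: field_simps)
    finally show ?thesis .
  qed
  then have "(\<Sum>l\<in>{n..<m}. tail F m / (C * real m)) \<le> (\<Sum>l\<in>{n..<m}. 1 / F l)"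
    by (intro sum_mono) auto
  then have "(real m - real n) * (tail F m / (C * real m)) \<le> tail F n - tail F m"
    using tail_diff_eq_sum[OF n(2)] n by (simp add: of_nat_diff)
  then show ?thesis by (simp add: algebra_simps)
qed

lemma tail_quotient_close:
  assumes K: "K > 0" and c: "c \<ge> 1" and small: "(c - 1) / K \<le> 1 / 2"
    and growth: "\<And>l. k0 \<le> l \<Longrightarrow> K * real l \<le> F l * tail F l"
    and nm: "1 \<le> k0" "k0 \<le> n" "k0 \<le> m"
    and comparable: "real m \<le> c * real n" "real n \<le> c * real m"
  shows "\<bar>tail F m / tail F n - 1\<bar> \<le> 2 * ((c - 1) / K)"
proof -
  have close: "(1 - (c - 1) / K) * tail F i \<le> tail F j \<and> tail F j \<le> tail F i"
    if ij: "k0 \<le> i" "i \<le> j" "real j \<le> c * real i" for i j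
  proof
    have "(real j - real i) / (K * real i) \<le> (c - 1) * real i / (K * real i)"
      using ij K by (intro divide_right_mono) (auto simp: algebra_simps)
    also have "\<dots> = (c - 1) / K" using ij nm(1) by simp
    finally have "(1 - (c - 1) / K) * tail F i \<le> (1 - (real j - real i) / (K * real i)) * tail F i"
      using tail_pos[of i] by (intro mult_right_mono) auto
    also have "\<dots> \<le> tail F j"
      using ij nm(1) by (intro tail_diff_le_of_growth[OF K growth]) auto
    finally show "(1 - (c - 1) / K) * tail F i \<le> tail F j" .
    show "tail F j \<le> tail F i" using tail_antimono[OF ij(2)] .
  qed
  have "0 \<le> (c - 1) / K" using K c by simp
  show ?thesis
  proof (cases "n \<le> m")
    case True
    then show ?thesis
      using close[OF nm(2) True comparable(1)] tail_pos[of m] small \<open>0 \<le> (c - 1) / K\<close>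
      by (intro abs_quotient_sub_one_le(1)) auto
  next
    case False
    then show ?thesis
      using close[OF nm(3) _ comparable(2)] tail_pos[of n] small \<open>0 \<le> (c - 1) / K\<close>
      by (intro abs_quotient_sub_one_le(2)) auto
  qed
qed

lemma tail_quotient_tendsto_1:
  assumes growth: "filterlim (\<lambda>k. (1 / real k) * F k * tail F k) at_top sequentially"
    and c: "c \<ge> 1"
    and comparable:
      "eventually (\<lambda>N. real (p N) \<le> c * real (q N) \<and> real (q N) \<le> c * real (p N)) sequentially"
    and q: "filterlim q at_top sequentially"
  shows "((\<lambda>N. tail F (p N) / tail F (q N)) \<longlongrightarrow> 1) sequentially"
  unfolding tendsto_iff
proof (intro allI impI)
  fix e :: real assume e: "e > 0"
  define K where "K = c * (4 + 2 * e) / e"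
  have K: "K > 0" using c e by (simp add: K_def)
  have K_small: "(c - 1) / K \<le> e / (4 + 2 * e)"
  proof -
    have "(c - 1) / K \<le> c / K" using K by (simp add: divide_right_mono)
    also have "\<dots> = e / (4 + 2 * e)" using c e by (simp add: K_def)
    finally show ?thesis .
  qed
  have "e / (4 + 2 * e) < 1 / 2" and "2 * (e / (4 + 2 * e)) < e"
    using e by (simp_all add: field_simps add_pos_pos)
  then have "(c - 1) / K \<le> 1 / 2" and "2 * ((c - 1) / K) < e"
    using K_small by linarith+
  have "eventually (\<lambda>k. K \<le> (1 / real k) * F k * tail F k) sequentially"
    using growth by (simp add: filterlim_at_top)
  then obtain k0 where k0: "\<And>k. k \<ge> k0 \<Longrightarrow> K \<le> (1 / real k) * F k * tail F k"
    by (auto simp: eventually_sequentially)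
  define k1 where "k1 = max k0 1"
  have growth_K: "K * real l \<le> F l * tail F l" if "k1 \<le> l" for l
    using k0[of l] that by (simp add: k1_def field_simps)
  have "eventually (\<lambda>N. nat \<lceil>c * real k1\<rceil> \<le> q N) sequentially"
    using q unfolding filterlim_at_top by blast
  then have "eventually (\<lambda>N. c * real k1 \<le> real (q N)) sequentially"
    by eventually_elim (use real_nat_ceiling_ge order.trans of_nat_mono in blast)
  with comparable show "eventually (\<lambda>N. dist (tail F (p N) / tail F (q N)) 1 < e) sequentially"
  proof eventually_elim
    case (elim N)
    have "real k1 \<le> c * real k1" using mult_right_mono[OF c, of "real k1"] by simp
    then have "k1 \<le> q N" using elim by linarith
    have "c * real k1 \<le> c * real (p N)" using elim by linarith
    then have "k1 \<le> p N" using c by simp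
    moreover have "1 \<le> k1" by (simp add: k1_def)
    ultimately have "\<bar>tail F (p N) / tail F (q N) - 1\<bar> \<le> 2 * ((c - 1) / K)"
      using elim \<open>k1 \<le> q N\<close>
      by (intro tail_quotient_close[OF K c \<open>(c - 1) / K \<le> 1 / 2\<close> growth_K]) auto
    then show ?case using \<open>2 * ((c - 1) / K) < e\<close> by (simp add: dist_real_def)
  qed
qed

lemma tail_quotient_tendsto_1_linear:
  assumes growth: "filterlim (\<lambda>k. (1 / real k) * F k * tail F k) at_top sequentially"
    and r: "r > 0" and s: "s > 0"
    and p: "\<And>N. \<bar>real (p N) - r * real N\<bar> \<le> d"
    and q: "\<And>N. \<bar>real (q N) - s * real N\<bar> \<le> d"
  shows "((\<lambda>N. tail F (p N) / tail F (q N)) \<longlongrightarrow> 1) sequentially"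
proof (rule tail_quotient_tendsto_1[OF growth _ _ filterlim_at_top_linear_approx[OF s q]])
  define c where "c = 4 * (r / s + s / r + 1)"
  show "1 \<le> c" using r s by (simp add: c_def)
  show "eventually (\<lambda>N. real (p N) \<le> c * real (q N) \<and> real (q N) \<le> c * real (p N)) sequentially"
    using linear_approx_eventually_bounds[OF r p] linear_approx_eventually_bounds[OF s q]
  proof eventually_elim
    case (elim N)
    have "real (p N) \<le> 4 * (r / s) * (s * real N / 2)" using elim s by simp
    also have "\<dots> \<le> c * real (q N)"
      using elim r s by (intro mult_mono) (auto simp: c_def)
    finally have "real (p N) \<le> c * real (q N)" .
    moreover have "real (q N) \<le> 4 * (s / r) * (r * real N / 2)" using elim r by simp
    then have "real (q N) \<le> c * real (p N)"
      using elim r s by (elim order.trans, intro mult_mono) (auto simp: c_def)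
    ultimately show ?case ..
  qed
qed

lemma limsup_tail_quotient_shift_lt_1:
  assumes bound: "\<forall>k. (1 / real k) * F k * tail F k \<le> C"
    and a: "a > 0" and \<epsilon>: "\<epsilon> > 0" and g: "\<And>N. g N \<ge> 0"
    and lim: "(\<lambda>N. tail F (lowidx a N) / g N) \<longlonglongrightarrow> 1"
  shows "limsup (\<lambda>N. ereal (tail F (lowidx (a + \<epsilon>) N) / g N)) < 1"
proof -
  have "0 < F 1 * tail F 1" using pos tail_pos by simp
  then have C: "C > 0" using bound[rule_format, of 1] by simp
  have bound': "F l * tail F l \<le> C * real l" if "1 \<le> l" for l
    using bound[rule_format, of l] that by (simp add: field_simps)
  define \<delta> where "\<delta> = \<epsilon> / (2 * (a + \<epsilon>))"
  define \<theta> where "\<theta> = 1 / (1 + \<delta> / C)"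
  have \<delta>: "\<delta> > 0" using a \<epsilon> by (simp add: \<delta>_def)
  have "0 < \<delta> / C" using \<delta> C by simp
  then have "\<theta> < 1" by (simp add: \<theta>_def)
  have "eventually (\<lambda>N. tail F (lowidx (a + \<epsilon>) N) / g N \<le> \<theta> * (tail F (lowidx a N) / g N))
      sequentially"
    using lowidx_shift_gap_eventually[OF a \<epsilon>]
  proof eventually_elim
    case (elim N)
    define n m where "n = lowidx a N" and "m = lowidx (a + \<epsilon>) N"
    have nm: "1 \<le> n" "n \<le> m" "\<delta> * real m \<le> real m - real n"
      using elim by (simp_all add: n_def m_def \<delta>_def)
    have "\<delta> / C \<le> (real m - real n) / (C * real m)"
      using nm C by (simp add: field_simps)
    then have "(1 + \<delta> / C) * tail F m \<le> (1 + (real m - real n) / (C * real m)) * tail F m"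
      using tail_pos[of m] by (intro mult_right_mono) auto
    also have "\<dots> \<le> tail F n"
      using nm bound' by (intro tail_diff_ge_of_bound[OF C]) auto
    finally have "tail F m \<le> \<theta> * tail F n"
      using \<delta> C by (simp add: \<theta>_def field_simps)
    then show ?case
      using g[of N] by (simp add: n_def m_def divide_right_mono)
  qed
  then have "limsup (\<lambda>N. ereal (tail F (lowidx (a + \<epsilon>) N) / g N))
      \<le> limsup (\<lambda>N. ereal (\<theta> * (tail F (lowidx a N) / g N)))"
    by (intro Limsup_mono) (simp add: eventually_mono)
  also have "\<dots> = ereal \<theta>"
    using tendsto_mult[OF tendsto_const lim, of \<theta>]
    by (intro lim_imp_Limsup) (auto intro: tendsto_ereal)
  also have "\<dots> < 1" using \<open>\<theta> < 1\<close> by simp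
  finally show ?thesis .
qed

end

lemma tail_ratio_tendsto_1_rescale:
  assumes Fi: "recip_summable Fi" and Fj: "recip_summable Fj"
    and growth: "filterlim (\<lambda>k. (1 / real k) * Fi k * tail Fi k) at_top sequentially"
    and a0: "a0 > 0" and b0: "b0 > 0" and lim0: "tail_ratio Fi Fj a0 b0 \<longlonglongrightarrow> 1"
    and a: "a > 0" and b: "b > 0"
  shows "tail_ratio Fi Fj a b \<longlonglongrightarrow> 1"
proof -
  interpret i: recip_summable Fi by (fact Fi)
  interpret j: recip_summable Fj by (fact Fj)
  define r where "r = b / b0"
  have r: "r > 0" and b0r: "b0 * r = b" using b b0 by (simp_all add: r_def)
  have along: "(\<lambda>N. tail Fj (lowidx b0 (M N)) / tail Fi (lowidx a N)) \<longlonglongrightarrow> 1"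
    if M: "\<And>N. \<bar>real (M N) - r * real N\<bar> \<le> 1" for M
  proof -
    have lim0M: "(\<lambda>N. tail_ratio Fi Fj a0 b0 (M N)) \<longlonglongrightarrow> 1"
      by (rule filterlim_compose[OF lim0 filterlim_at_top_linear_approx[OF r M]])
    have "\<bar>real (lowidx a0 (M N)) - a0 * r * real N\<bar> \<le> a0 + 1 / 2" for N
    proof -
      have "\<bar>real (lowidx a0 (M N)) - a0 * real (M N)\<bar> \<le> 1 / 2"
        using a0 by (intro lowidx_approx) simp
      moreover have "\<bar>a0 * real (M N) - a0 * r * real N\<bar> \<le> a0"
      proof -
        have "a0 * real (M N) - a0 * r * real N = a0 * (real (M N) - r * real N)"
          by (simp add: algebra_simps)
        then have "\<bar>a0 * real (M N) - a0 * r * real N\<bar> = a0 * \<bar>real (M N) - r * real N\<bar>"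
          using a0 by (simp add: abs_mult)
        then show ?thesis using mult_left_mono[OF M[of N], of a0] a0 by simp
      qed
      ultimately show ?thesis by linarith
    qed
    moreover have "\<bar>real (lowidx a N) - a * real N\<bar> \<le> a0 + 1 / 2" for N
      using lowidx_approx[of a N] a a0 by simp
    ultimately have "(\<lambda>N. tail Fi (lowidx a0 (M N)) / tail Fi (lowidx a N)) \<longlonglongrightarrow> 1"
      using a0 r a
      by (intro i.tail_quotient_tendsto_1_linear[OF growth, where r = "a0 * r" and s = a]) auto
    from tendsto_divide[OF this lim0M] show ?thesis
      using i.tail_pos by (simp add: tail_ratio_def less_imp_neq[THEN not_sym])
  qed
  define M1 M2 where "M1 N = nat \<lfloor>r * real N\<rfloor>" and "M2 N = nat \<lceil>r * real N\<rceil>" for N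
  have M1: "real (M1 N) \<le> r * real N" "\<bar>real (M1 N) - r * real N\<bar> \<le> 1"
    and M2: "r * real N \<le> real (M2 N)" "\<bar>real (M2 N) - r * real N\<bar> \<le> 1" for N
    using r ceiling_correct[of "r * real N"] by (auto simp: M1_def M2_def abs_le_iff)
      (use real_of_int_floor_add_one_ge[of "r * real N"] in linarith)
  have "(\<lambda>N. tail Fj (lowidx b N) / tail Fi (lowidx a N)) \<longlonglongrightarrow> 1"
  proof (rule tendsto_sandwich[OF _ _ along[OF M2(2)] along[OF M1(2)]]; intro always_eventually allI)
    fix N
    have "b * real N = b0 * (r * real N)" using b0r by simp
    also have "\<dots> \<le> b0 * real (M2 N)" using M2(1) b0 by (intro mult_left_mono) auto
    finally have "lowidx b N \<le> lowidx b0 (M2 N)" using b by (intro lowidx_mono) simp_all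
    then show "tail Fj (lowidx b0 (M2 N)) / tail Fi (lowidx a N)
        \<le> tail Fj (lowidx b N) / tail Fi (lowidx a N)"
      using i.tail_pos by (intro divide_right_mono j.tail_antimono) (simp_all add: less_imp_le)
    have "b0 * real (M1 N) \<le> b0 * (r * real N)" using M1(1) b0 by (intro mult_left_mono) auto
    also have "\<dots> = b * real N" using b0r by simp
    finally have "lowidx b0 (M1 N) \<le> lowidx b N" using b0 by (intro lowidx_mono) simp_all
    then show "tail Fj (lowidx b N) / tail Fi (lowidx a N)
        \<le> tail Fj (lowidx b0 (M1 N)) / tail Fi (lowidx a N)"
      using i.tail_pos by (intro divide_right_mono j.tail_antimono) (simp_all add: less_imp_le)
  qed
  from tendsto_divide[OF tendsto_const this, of 1] show ?thesis
    by (simp add: tail_ratio_def[abs_def])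
qed

theorem mainTheorem7:
  fixes Fi Fj :: "nat \<Rightarrow> real"
  assumes posi: "\<And>k. Fi k > 0" and posj: "\<And>k. Fj k > 0"
    and sumi: "summable (\<lambda>k. 1 / Fi k)" and sumj: "summable (\<lambda>k. 1 / Fj k)"
  shows
    "(\<forall>a b. a > 0 \<and> b > 0 \<and> a + b \<le> 1 \<and>
        (tail_ratio Fi Fj a b \<longlonglongrightarrow> 1) \<and>
        (\<exists>C::real. \<forall>k::nat. (1 / real k) * Fi k * tail Fi k \<le> C)
        \<longrightarrow> (\<forall>\<epsilon>>0. limsup (\<lambda>N. ereal (tail_ratio Fi Fj (a + \<epsilon>) b N)) < 1))
     \<and>
     ((filterlim (\<lambda>k. (1 / real k) * Fi k * tail Fi k) at_top sequentially) \<and>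
      (\<exists>a b. a > 0 \<and> b > 0 \<and> a + b \<le> 1 \<and> (tail_ratio Fi Fj a b \<longlonglongrightarrow> 1))
      \<longrightarrow> (\<forall>a b. a > 0 \<and> b > 0 \<and> a + b \<le> 1 \<longrightarrow> (tail_ratio Fi Fj a b \<longlonglongrightarrow> 1)))"
proof -
  interpret i: recip_summable Fi using posi sumi by unfold_locales
  interpret j: recip_summable Fj using posj sumj by unfold_locales
  have "limsup (\<lambda>N. ereal (tail_ratio Fi Fj (a + \<epsilon>) b N)) < 1"
    if "a > 0" "\<epsilon> > 0" "tail_ratio Fi Fj a b \<longlonglongrightarrow> 1"
      "\<forall>k. (1 / real k) * Fi k * tail Fi k \<le> C" for a b \<epsilon> C
    using i.limsup_tail_quotient_shift_lt_1[of C a \<epsilon> "\<lambda>N. tail Fj (lowidx b N)"] that j.tail_pos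
    by (simp add: tail_ratio_def[abs_def] less_imp_le)
  moreover have "tail_ratio Fi Fj a b \<longlonglongrightarrow> 1"
    if "filterlim (\<lambda>k. (1 / real k) * Fi k * tail Fi k) at_top sequentially"
      "a0 > 0" "b0 > 0" "tail_ratio Fi Fj a0 b0 \<longlonglongrightarrow> 1" "a > 0" "b > 0" for a0 b0 a b
    using tail_ratio_tendsto_1_rescale[OF i.recip_summable_axioms j.recip_summable_axioms] that
    by blast
  ultimately show ?thesis by blast
qed

end
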